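(* Let $\mathbf L=\{L_1,\dots,L_n\}$ be a finite multiset of positive rationals indexed so that $L_1\ge L_2\ge\cdots\ge L_n$, let $k\in\mathbb N_{>0}$, and suppose $L_{co}\ne l^\star$. Then $(I_{co},\,i\mapsto 1,\,i\mapsto\lceil k/i\rceil)$ is an admissible restriction. Moreover $|\mathcal C(I_{co},1,\lceil k/i\rceil)|=\sum_{i\in I_{co}}\lceil k/i\rceil$, and in the worst case (pairwise distinct lengths, where $|I_{co}|=\min(k-1,n)$) this is $\Theta\bigl(k\log\min(k,n)\bigr)$.
   Context: $m(l)=\sum_{i=1}^n\lfloor L_i/l\rfloor$, $c(l)=\sum_i(\lceil L_i/l\rceil-1)$; $l$ feasible iff $m(l)\ge k$; $l^\star$ is the unique optimal cut length (feasible length minimizing $c$ among feasible lengths; equals the largest feasible length). $L^{(k)}$ is the $k$-th largest element of $\mathbf L$ with multiplicity; $L_{co}=L^{(k)}$ if $k\le n$, $L_{co}=0$ if $k>n$; $I_{co}=\{i: L_i>L_{co}\}$. Candidate multiset $\mathcal C(I,f_l,f_u)=\biguplus_{i\in I}\{L_i/j: j\in\mathbb N,\ f_l(i)\le j\le f_u(i)\}$ (one occurrence per pair). A triple $(I,f_l,f_u)$ with $f_l,f_u:I\to\mathbb N_{>0}$ is an admissible restriction if (i) for all $i\in I$, $f_l(i)=1$ or $L_i/(f_l(i)-1)$ is infeasible; (ii) for all $i\in I$, $L_i/f_u(i)$ is feasible; (iii) for all $i'\notin I$, $L_{i'}$ is feasible and $L_{i'}\ne l^\star$. *)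

theory Defs
  imports Complex_Main "HOL-Library.Multiset"
begin

text \<open>The multiset of lengths is given as L_1 >= ... >= L_n, i.e. a function
  L :: nat => rat on the index set {1..n}.\<close>

definition num_pieces :: "(nat \<Rightarrow> rat) \<Rightarrow> nat \<Rightarrow> rat \<Rightarrow> int" where
  "num_pieces L n l = (\<Sum>i=1..n. \<lfloor>L i / l\<rfloor>)"

definition num_cuts :: "(nat \<Rightarrow> rat) \<Rightarrow> nat \<Rightarrow> rat \<Rightarrow> int" where
  "num_cuts L n l = (\<Sum>i=1..n. \<lceil>L i / l\<rceil> - 1)"

definition feasible :: "(nat \<Rightarrow> rat) \<Rightarrow> nat \<Rightarrow> nat \<Rightarrow> rat \<Rightarrow> bool" where
  "feasible L n k l \<longleftrightarrow> 0 < l \<and> int k \<le> num_pieces L n l"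

definition lstar :: "(nat \<Rightarrow> rat) \<Rightarrow> nat \<Rightarrow> nat \<Rightarrow> rat" where
  "lstar L n k = (GREATEST l. feasible L n k l)"

text \<open>For L sorted non-increasingly, the k-th largest element with multiplicity is L k.\<close>
definition L_co :: "(nat \<Rightarrow> rat) \<Rightarrow> nat \<Rightarrow> nat \<Rightarrow> rat" where
  "L_co L n k = (if k \<le> n then L k else 0)"

definition I_co :: "(nat \<Rightarrow> rat) \<Rightarrow> nat \<Rightarrow> nat \<Rightarrow> nat set" where
  "I_co L n k = {i \<in> {1..n}. L i > L_co L n k}"

definition candidates ::
  "(nat \<Rightarrow> rat) \<Rightarrow> nat set \<Rightarrow> (nat \<Rightarrow> nat) \<Rightarrow> (nat \<Rightarrow> nat) \<Rightarrow> rat multiset" where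
  "candidates L I fl fu = (\<Sum>i\<in>I. image_mset (\<lambda>j. L i / of_nat j) (mset_set {fl i..fu i}))"

definition admissible_restriction ::
  "(nat \<Rightarrow> rat) \<Rightarrow> nat \<Rightarrow> nat \<Rightarrow> nat set \<Rightarrow> (nat \<Rightarrow> nat) \<Rightarrow> (nat \<Rightarrow> nat) \<Rightarrow> bool" where
  "admissible_restriction L n k I fl fu \<longleftrightarrow>
     I \<subseteq> {1..n} \<and>
     (\<forall>i\<in>I. 0 < fl i \<and> 0 < fu i) \<and>
     (\<forall>i\<in>I. fl i = 1 \<or> \<not> feasible L n k (L i / of_nat (fl i - 1))) \<and>
     (\<forall>i\<in>I. feasible L n k (L i / of_nat (fu i))) \<and>
     (\<forall>i'\<in>{1..n} - I. feasible L n k (L i') \<and> L i' \<noteq> lstar L n k)"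

definition ceil_div :: "nat \<Rightarrow> nat \<Rightarrow> nat" where
  "ceil_div k i = nat \<lceil>(of_nat k :: rat) / of_nat i\<rceil>"

end

theory Submission
  imports Defs "HOL-Analysis.Harmonic_Numbers"
begin

text \<open>
  Every length \<open>l \<le> L\<^sub>k\<close> is feasible, since each of the \<open>k\<close> longest rods yields a piece;
  so the lengths outside \<open>I_co\<close>, being at most \<open>L_co = L\<^sub>k\<close>, are feasible and, as
  \<open>L_co \<noteq> l\<^sup>\<star>\<close>, strictly shorter than the optimum. For \<open>i \<in> I_co\<close>, cutting each of
  \<open>L\<^sub>1 \<ge> \<dots> \<ge> L\<^sub>i\<close> into \<open>\<lceil>k/i\<rceil>\<close> pieces of length \<open>L\<^sub>i/\<lceil>k/i\<rceil>\<close> gives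
  \<open>i\<lceil>k/i\<rceil> \<ge> k\<close> pieces. Finally \<open>I_co \<subseteq> {1..m}\<close> with \<open>m = min (k-1) n\<close>, with equality
  for distinct lengths, and \<open>k H\<^sub>m \<le> \<Sum>\<^sub>i\<^sub>\<le>\<^sub>m \<lceil>k/i\<rceil> \<le> k H\<^sub>m + m\<close>, where the harmonic
  number \<open>H\<^sub>m\<close> is \<open>\<Theta>(log m)\<close>.
\<close>

subsection \<open>Feasible lengths and the optimal cut length\<close>

lemma num_pieces_ge_sum:
  assumes "\<And>j. j \<in> {1..n} \<Longrightarrow> g j \<le> \<lfloor>L j / l\<rfloor>"
  shows "sum g {1..n} \<le> num_pieces L n l"
  unfolding num_pieces_def using assms by (intro sum_mono) auto

lemma num_pieces_ge_prefix:
  fixes L :: "nat \<Rightarrow> rat"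
  assumes pos: "\<forall>i\<in>{1..n}. 0 < L i"
    and sorted: "\<forall>i\<in>{1..n}. \<forall>j\<in>{1..n}. i \<le> j \<longrightarrow> L j \<le> L i"
    and i: "i \<in> {1..n}" and l: "0 < l" and cl: "of_nat c * l \<le> L i"
  shows "int (i * c) \<le> num_pieces L n l"
proof -
  have "(\<Sum>j=1..n. if j \<le> i then int c else 0) \<le> num_pieces L n l"
  proof (rule num_pieces_ge_sum)
    fix j assume j: "j \<in> {1..n}"
    show "(if j \<le> i then int c else 0) \<le> \<lfloor>L j / l\<rfloor>"
    proof (cases "j \<le> i")
      case True
      then have "of_nat c * l \<le> L j" using cl sorted i j by force
      then show ?thesis using True l by (simp add: le_floor_iff pos_le_divide_eq)
    next
      case False
      have "0 < L j" using pos j by blast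
      then show ?thesis using False l by simp
    qed
  qed
  moreover have "{1..n} \<inter> {j. j \<le> i} = {1..i}" using i by auto
  then have "(\<Sum>j=1..n. if j \<le> i then int c else 0) = int (i * c)"
    by (simp add: sum.If_cases)
  ultimately show ?thesis by simp
qed

text \<open>
  A feasible length \<open>l\<close> can be raised to one of the finitely many lengths \<open>L\<^sub>j/t\<close> with
  \<open>1 \<le> t \<le> k\<close>: keep \<open>t\<^sub>j = min k \<lfloor>L\<^sub>j/l\<rfloor>\<close> pieces from each \<open>L\<^sub>j\<close> and stretch
  them to the shortest of the lengths \<open>L\<^sub>j/t\<^sub>j\<close>.
\<close>

lemma feasible_shortest_stretched_length:
  fixes L :: "nat \<Rightarrow> rat" and t :: "nat \<Rightarrow> nat"
  assumes pos: "\<forall>i\<in>{1..n}. 0 < L i" and k: "0 < k"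
    and t: "int k \<le> (\<Sum>j=1..n. int (t j))"
  obtains j where "j \<in> {1..n}" "0 < t j" "feasible L n k (L j / of_nat (t j))"
    and "\<And>i. i \<in> {1..n} \<Longrightarrow> 0 < t i \<Longrightarrow> L j / of_nat (t j) \<le> L i / of_nat (t i)"
proof -
  define J where "J = {j \<in> {1..n}. 0 < t j}"
  have "J \<noteq> {}"
  proof
    assume "J = {}"
    then have "\<forall>j\<in>{1..n}. t j = 0" by (auto simp: J_def)
    then show False using t k by simp
  qed
  define l where "l = Min ((\<lambda>j. L j / of_nat (t j)) ` J)"
  have l_le: "l \<le> L j / of_nat (t j)" if "j \<in> J" for j
    using that by (simp add: l_def J_def)
  have "l \<in> (\<lambda>j. L j / of_nat (t j)) ` J"
    unfolding l_def using \<open>J \<noteq> {}\<close> by (intro Min_in) (simp_all add: J_def)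
  then obtain j where j: "j \<in> J" "l = L j / of_nat (t j)" by blast
  then have "0 < l" using pos by (simp add: J_def)
  have "int (t i) \<le> \<lfloor>L i / l\<rfloor>" if i: "i \<in> {1..n}" for i
  proof (cases "i \<in> J")
    case True
    then have "of_nat (t i) * l \<le> L i"
      using l_le[of i] by (simp add: J_def pos_le_divide_eq mult.commute)
    then show ?thesis using \<open>0 < l\<close> by (simp add: le_floor_iff pos_le_divide_eq)
  next
    case False
    then have "t i = 0" using i by (simp add: J_def)
    moreover have "0 < L i" using pos i by blast
    ultimately show ?thesis using \<open>0 < l\<close> by simp
  qed
  then have "feasible L n k l"
    using num_pieces_ge_sum t \<open>0 < l\<close> unfolding feasible_def by (meson order_trans)
  then show ?thesis using that j l_le by (auto simp: J_def)
qed

lemma feasible_bounded_by_candidate: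
  fixes L :: "nat \<Rightarrow> rat"
  assumes pos: "\<forall>i\<in>{1..n}. 0 < L i" and k: "0 < k" and fl: "feasible L n k l"
  shows "\<exists>j\<in>{1..n}. \<exists>t\<in>{1..k}. l \<le> L j / of_nat t \<and> feasible L n k (L j / of_nat t)"
proof -
  have l: "0 < l" and kl: "int k \<le> num_pieces L n l" using fl by (auto simp: feasible_def)
  define t where "t j = min k (nat \<lfloor>L j / l\<rfloor>)" for j
  have floor_nonneg: "0 \<le> \<lfloor>L j / l\<rfloor>" if "j \<in> {1..n}" for j
  proof -
    have "0 < L j" using pos that by blast
    then show ?thesis using l by simp
  qed
  have "int k \<le> (\<Sum>j=1..n. int (t j))"
  proof (cases "\<exists>j\<in>{1..n}. int k \<le> \<lfloor>L j / l\<rfloor>")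
    case True
    then obtain j where j: "j \<in> {1..n}" "int k \<le> \<lfloor>L j / l\<rfloor>" by blast
    then have "t j = k" by (simp add: t_def le_nat_iff)
    then show ?thesis using j(1) member_le_sum[of j "{1..n}" "\<lambda>j. int (t j)"] by simp
  next
    case False
    have "int (t j) = \<lfloor>L j / l\<rfloor>" if "j \<in> {1..n}" for j
    proof -
      have "\<lfloor>L j / l\<rfloor> < int k" using False that by force
      then show ?thesis using floor_nonneg[OF that] by (simp add: t_def)
    qed
    then show ?thesis using kl unfolding num_pieces_def by simp
  qed
  then obtain j where j: "j \<in> {1..n}" "0 < t j" "feasible L n k (L j / of_nat (t j))"
    using feasible_shortest_stretched_length[OF pos k] by blast
  have "(of_nat (t j) :: rat) \<le> of_nat (nat \<lfloor>L j / l\<rfloor>)" by (simp add: t_def)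
  also have "\<dots> = of_int \<lfloor>L j / l\<rfloor>" using floor_nonneg[OF j(1)] by simp
  also have "\<dots> \<le> L j / l" by (rule of_int_floor_le)
  finally have "l \<le> L j / of_nat (t j)" using l j(2) by (simp add: field_simps)
  moreover have "t j \<le> k" by (simp add: t_def)
  then have "t j \<in> {1..k}" using j(2) by simp
  ultimately show ?thesis using j(1,3) by blast
qed

lemma lstar_greatest:
  fixes L :: "nat \<Rightarrow> rat"
  assumes n: "1 \<le> n" and pos: "\<forall>i\<in>{1..n}. 0 < L i" and k: "0 < k"
  shows "feasible L n k (lstar L n k) \<and> (\<forall>l. feasible L n k l \<longrightarrow> l \<le> lstar L n k)"
proof -
  define S where
    "S = {l. feasible L n k l \<and> (\<exists>j\<in>{1..n}. \<exists>t\<in>{1..k}. l = L j / of_nat t)}"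
  have "S \<subseteq> (\<lambda>(j, t). L j / of_nat t) ` ({1..n} \<times> {1..k})" unfolding S_def by force
  then have "finite S" by (rule finite_subset) simp
  have "0 < L 1" using pos n by simp
  have "(\<Sum>j=1..n. if j = 1 then int k else 0) \<le> num_pieces L n (L 1 / of_nat k)"
  proof (rule num_pieces_ge_sum)
    fix j assume "j \<in> {1..n}"
    then have "0 < L j" using pos by blast
    then show "(if j = 1 then int k else 0) \<le> \<lfloor>L j / (L 1 / of_nat k)\<rfloor>"
      using \<open>0 < L 1\<close> by simp
  qed
  then have "feasible L n k (L 1 / of_nat k)"
    using \<open>0 < L 1\<close> n k by (simp add: feasible_def)
  have below_S: "\<exists>s\<in>S. l \<le> s" if fl: "feasible L n k l" for l
  proof -
    obtain j t where "j \<in> {1..n}" "t \<in> {1..k}" "l \<le> L j / of_nat t"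
      and "feasible L n k (L j / of_nat t)"
      using feasible_bounded_by_candidate[OF pos k fl] by blast
    then show ?thesis unfolding S_def by blast
  qed
  have le_Max: "l \<le> Max S" if "feasible L n k l" for l
    using below_S[OF that] \<open>finite S\<close> Max_ge order_trans by blast
  have "S \<noteq> {}" using below_S[OF \<open>feasible L n k (L 1 / of_nat k)\<close>] by blast
  have "Max S \<in> S" using \<open>finite S\<close> \<open>S \<noteq> {}\<close> by (rule Max_in)
  then have "lstar L n k = Max S"
    unfolding lstar_def using le_Max by (intro Greatest_equality) (auto simp: S_def)
  then show ?thesis using \<open>Max S \<in> S\<close> le_Max by (simp add: S_def)
qed

subsection \<open>Admissibility of the restriction to \<open>I_co\<close>\<close>

lemma ceil_div_bounds:
  assumes "0 < i"
  shows "k \<le> ceil_div k i * i" and "ceil_div k i * i < k + i"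
proof -
  let ?q = "of_nat k / of_nat i :: rat"
  have "of_nat (ceil_div k i) = (of_int \<lceil>?q\<rceil> :: rat)" by (simp add: ceil_div_def)
  then have "?q \<le> of_nat (ceil_div k i)" "of_nat (ceil_div k i) < ?q + 1"
    using ceiling_correct[of ?q] by auto
  then have "(of_nat k :: rat) \<le> of_nat (ceil_div k i * i)"
    and "(of_nat (ceil_div k i * i) :: rat) < of_nat (k + i)"
    using assms by (simp_all add: field_simps)
  then show "k \<le> ceil_div k i * i" and "ceil_div k i * i < k + i"
    by (simp_all only: of_nat_le_iff of_nat_less_iff)
qed

lemma ceil_div_pos: "0 < k \<Longrightarrow> 0 < i \<Longrightarrow> 0 < ceil_div k i"
  using ceil_div_bounds(1)[of i k] by (cases "ceil_div k i") auto

lemma feasible_div_ceil_div: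
  fixes L :: "nat \<Rightarrow> rat"
  assumes pos: "\<forall>i\<in>{1..n}. 0 < L i"
    and sorted: "\<forall>i\<in>{1..n}. \<forall>j\<in>{1..n}. i \<le> j \<longrightarrow> L j \<le> L i"
    and k: "0 < k" and i: "i \<in> {1..n}"
  shows "feasible L n k (L i / of_nat (ceil_div k i))"
proof -
  have c: "0 < ceil_div k i" using ceil_div_pos k i by simp
  then have l: "0 < L i / of_nat (ceil_div k i)" using pos i by simp
  have "int (i * ceil_div k i) \<le> num_pieces L n (L i / of_nat (ceil_div k i))"
    using c by (intro num_pieces_ge_prefix[OF pos sorted i l]) simp
  moreover have "k \<le> i * ceil_div k i" using ceil_div_bounds(1)[of i k] i by (simp add: mult.commute)
  ultimately show ?thesis using l unfolding feasible_def by linarith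
qed

lemma feasible_if_le_kth:
  fixes L :: "nat \<Rightarrow> rat"
  assumes pos: "\<forall>i\<in>{1..n}. 0 < L i"
    and sorted: "\<forall>i\<in>{1..n}. \<forall>j\<in>{1..n}. i \<le> j \<longrightarrow> L j \<le> L i"
    and k: "k \<in> {1..n}" and l: "0 < l" "l \<le> L k"
  shows "feasible L n k l"
  using num_pieces_ge_prefix[OF pos sorted k l(1), of 1] l by (simp add: feasible_def)

lemma outside_I_co_below_lstar:
  fixes L :: "nat \<Rightarrow> rat"
  assumes n: "1 \<le> n" and pos: "\<forall>i\<in>{1..n}. 0 < L i"
    and sorted: "\<forall>i\<in>{1..n}. \<forall>j\<in>{1..n}. i \<le> j \<longrightarrow> L j \<le> L i"
    and k: "0 < k" and co: "L_co L n k \<noteq> lstar L n k"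
    and i: "i \<in> {1..n} - I_co L n k"
  shows "feasible L n k (L i) \<and> L i < lstar L n k"
proof -
  have "L i \<le> L_co L n k" and Li: "0 < L i" using i pos by (auto simp: I_co_def)
  then have kn: "k \<le> n" and "L i \<le> L k" by (auto simp: L_co_def split: if_splits)
  have k_mem: "k \<in> {1..n}" using kn k by simp
  have "feasible L n k (L i)"
    using feasible_if_le_kth[OF pos sorted k_mem Li \<open>L i \<le> L k\<close>] .
  moreover have "L k \<le> lstar L n k"
    using lstar_greatest[OF n pos k] feasible_if_le_kth[OF pos sorted k_mem] pos k_mem by auto
  moreover have "L k \<noteq> lstar L n k" using co kn by (simp add: L_co_def)
  ultimately show ?thesis using \<open>L i \<le> L k\<close> by simp
qed

lemma admissible_I_co:
  fixes L :: "nat \<Rightarrow> rat"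
  assumes n: "1 \<le> n" and pos: "\<forall>i\<in>{1..n}. 0 < L i"
    and sorted: "\<forall>i\<in>{1..n}. \<forall>j\<in>{1..n}. i \<le> j \<longrightarrow> L j \<le> L i"
    and k: "0 < k" and co: "L_co L n k \<noteq> lstar L n k"
  shows "admissible_restriction L n k (I_co L n k) (\<lambda>i. 1) (\<lambda>i. ceil_div k i)"
proof -
  have sub: "I_co L n k \<subseteq> {1..n}" by (auto simp: I_co_def)
  have "0 < ceil_div k i" "feasible L n k (L i / of_nat (ceil_div k i))"
    if "i \<in> I_co L n k" for i
    using that sub ceil_div_pos[OF k] feasible_div_ceil_div[OF pos sorted k] by auto
  moreover have "feasible L n k (L i) \<and> L i \<noteq> lstar L n k" if "i \<in> {1..n} - I_co L n k" for i
    using outside_I_co_below_lstar[OF n pos sorted k co that] by simp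
  ultimately show ?thesis using sub unfolding admissible_restriction_def by simp
qed

subsection \<open>Counting the candidates\<close>

lemma size_candidates_from_1:
  assumes "finite I"
  shows "size (candidates L I (\<lambda>i. 1) fu) = (\<Sum>i\<in>I. fu i)"
  unfolding candidates_def using assms
  by (induction I rule: finite_induct) (auto simp: size_mset_set)

lemma size_candidates_I_co:
  "size (candidates L (I_co L n k) (\<lambda>i. 1) (\<lambda>i. ceil_div k i)) = (\<Sum>i\<in>I_co L n k. ceil_div k i)"
  by (rule size_candidates_from_1) (simp add: I_co_def)

lemma I_co_subset:
  fixes L :: "nat \<Rightarrow> rat"
  assumes sorted: "\<forall>i\<in>{1..n}. \<forall>j\<in>{1..n}. i \<le> j \<longrightarrow> L j \<le> L i" and k: "0 < k"
  shows "I_co L n k \<subseteq> {1..min (k - 1) n}"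
proof
  fix i assume "i \<in> I_co L n k"
  then have i: "i \<in> {1..n}" "L_co L n k < L i" by (auto simp: I_co_def)
  have "i < k" if "k \<le> n"
  proof (rule ccontr)
    assume "\<not> i < k"
    then have "k \<in> {1..n}" "k \<le> i" using i(1) that k by auto
    then have "L i \<le> L k" using sorted i(1) by blast
    then show False using i(2) that by (simp add: L_co_def)
  qed
  then show "i \<in> {1..min (k - 1) n}" using i(1) by (cases "k \<le> n") auto
qed

lemma I_co_eq_if_distinct:
  fixes L :: "nat \<Rightarrow> rat"
  assumes pos: "\<forall>i\<in>{1..n}. 0 < L i"
    and sorted: "\<forall>i\<in>{1..n}. \<forall>j\<in>{1..n}. i \<le> j \<longrightarrow> L j \<le> L i"
    and distinct: "\<forall>i\<in>{1..n}. \<forall>j\<in>{1..n}. i \<noteq> j \<longrightarrow> L i \<noteq> L j"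
    and k: "0 < k"
  shows "I_co L n k = {1..min (k - 1) n}"
proof
  show "{1..min (k - 1) n} \<subseteq> I_co L n k"
  proof
    fix i assume i: "i \<in> {1..min (k - 1) n}"
    show "i \<in> I_co L n k"
    proof (cases "k \<le> n")
      case True
      then have "L k \<le> L i" "L k \<noteq> L i" using sorted distinct i by auto
      then show ?thesis using i True by (auto simp: I_co_def L_co_def)
    qed (use i pos in \<open>auto simp: I_co_def L_co_def\<close>)
  qed
qed (rule I_co_subset[OF sorted k])

lemma ceil_div_real_bounds:
  assumes "0 < i"
  shows "real k / real i \<le> real (ceil_div k i)" and "real (ceil_div k i) \<le> real k / real i + 1"
proof -
  have "real k \<le> real (ceil_div k i) * real i"
    and "real (ceil_div k i) * real i \<le> real k + real i"
    using ceil_div_bounds[OF assms, of k]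
    by (simp_all only: of_nat_mult [symmetric] of_nat_add [symmetric] of_nat_le_iff less_imp_le)
  then show "real k / real i \<le> real (ceil_div k i)"
    and "real (ceil_div k i) \<le> real k / real i + 1"
    using assms by (simp_all add: field_simps)
qed

lemma sum_div_eq_harm: "(\<Sum>i=1..m. real k / real i) = real k * harm m"
  unfolding harm_def by (simp add: sum_distrib_left divide_inverse)

lemma harm_le_ln_plus_1: "1 \<le> m \<Longrightarrow> harm m \<le> ln (real m) + 1"
  using euler_mascheroni_sequence_decreasing[of 1 m] by (simp add: harm_def)

lemma sum_ceil_div_le: "real (\<Sum>i=1..m. ceil_div k i) \<le> real k * harm m + real m"
proof -
  have "real (\<Sum>i=1..m. ceil_div k i) \<le> (\<Sum>i=1..m. real k / real i + 1)"
    unfolding of_nat_sum using ceil_div_real_bounds(2) by (intro sum_mono) auto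
  also have "\<dots> = real k * harm m + real m" by (simp only: sum.distrib sum_div_eq_harm) simp
  finally show ?thesis .
qed

lemma sum_ceil_div_ge: "real k * harm m \<le> real (\<Sum>i=1..m. ceil_div k i)"
  unfolding sum_div_eq_harm [symmetric] of_nat_sum
  using ceil_div_real_bounds(1) by (intro sum_mono) auto

lemma size_candidates_I_co_upper:
  fixes L :: "nat \<Rightarrow> rat"
  assumes n: "2 \<le> n" and k: "2 \<le> k"
    and sorted: "\<forall>i\<in>{1..n}. \<forall>j\<in>{1..n}. i \<le> j \<longrightarrow> L j \<le> L i"
  shows "real (size (candidates L (I_co L n k) (\<lambda>i. 1) (\<lambda>i. ceil_div k i)))
           \<le> 4 * real k * ln (real (min k n))"
proof -
  define m where "m = min (k - 1) n"
  have sub: "I_co L n k \<subseteq> {1..m}" using I_co_subset[OF sorted] k by (simp add: m_def)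
  have m: "1 \<le> m" "m \<le> min k n" "m \<le> k" using n k by (auto simp: m_def)
  have "ln 2 \<le> ln (real (min k n))" using n k by simp
  then have ln_ge: "2/3 \<le> ln (real (min k n))" using ln2_ge_two_thirds by linarith
  have "real (size (candidates L (I_co L n k) (\<lambda>i. 1) (\<lambda>i. ceil_div k i)))
        \<le> real (\<Sum>i=1..m. ceil_div k i)"
    unfolding size_candidates_I_co of_nat_le_iff using sub by (intro sum_mono2) auto
  also have "\<dots> \<le> real k * harm m + real m" by (rule sum_ceil_div_le)
  also have "\<dots> \<le> real k * (ln (real (min k n)) + 1) + real k"
  proof -
    have "ln (real m) \<le> ln (real (min k n))" using m by simp
    then have "harm m \<le> ln (real (min k n)) + 1" using harm_le_ln_plus_1[OF m(1)] by linarith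
    then show ?thesis using m by (simp add: mult_left_mono add_mono)
  qed
  also have "\<dots> \<le> 4 * real k * ln (real (min k n))"
    using mult_left_mono[OF ln_ge, of "real k"] by (simp add: algebra_simps)
  finally show ?thesis .
qed

lemma size_candidates_I_co_lower_if_distinct:
  fixes L :: "nat \<Rightarrow> rat"
  assumes k: "1 \<le> k" and pos: "\<forall>i\<in>{1..n}. 0 < L i"
    and sorted: "\<forall>i\<in>{1..n}. \<forall>j\<in>{1..n}. i \<le> j \<longrightarrow> L j \<le> L i"
    and distinct: "\<forall>i\<in>{1..n}. \<forall>j\<in>{1..n}. i \<noteq> j \<longrightarrow> L i \<noteq> L j"
  shows "real k * ln (real (min k n))
           \<le> real (size (candidates L (I_co L n k) (\<lambda>i. 1) (\<lambda>i. ceil_div k i)))"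
proof -
  define m where "m = min (k - 1) n"
  have "real k * ln (real (min k n)) \<le> real k * ln (real m + 1)"
    using k by (cases "n = 0") (auto simp: m_def intro!: mult_left_mono)
  also have "\<dots> \<le> real k * harm m" using ln_le_harm by (simp add: mult_left_mono)
  also have "\<dots> \<le> real (\<Sum>i=1..m. ceil_div k i)" by (rule sum_ceil_div_ge)
  also have "\<dots> = real (size (candidates L (I_co L n k) (\<lambda>i. 1) (\<lambda>i. ceil_div k i)))"
    unfolding size_candidates_I_co using I_co_eq_if_distinct[OF pos sorted distinct] k by (simp add: m_def)
  finally show ?thesis .
qed

lemma size_candidates_I_co_Theta:
  "\<exists>c1 c2 :: real. 0 < c1 \<and> 0 < c2 \<and>
       (\<forall>(L :: nat \<Rightarrow> rat) n k. 2 \<le> n \<longrightarrow> 2 \<le> k \<longrightarrow>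
          (\<forall>i\<in>{1..n}. 0 < L i) \<longrightarrow>
          (\<forall>i\<in>{1..n}. \<forall>j\<in>{1..n}. i \<le> j \<longrightarrow> L j \<le> L i) \<longrightarrow>
          card (I_co L n k) \<le> min (k - 1) n
          \<and> real (size (candidates L (I_co L n k) (\<lambda>i. 1) (\<lambda>i. ceil_div k i)))
              \<le> c2 * real k * ln (real (min k n))
          \<and> ((\<forall>i\<in>{1..n}. \<forall>j\<in>{1..n}. i \<noteq> j \<longrightarrow> L i \<noteq> L j) \<longrightarrow>
               card (I_co L n k) = min (k - 1) n
               \<and> c1 * real k * ln (real (min k n))
                 \<le> real (size (candidates L (I_co L n k) (\<lambda>i. 1) (\<lambda>i. ceil_div k i)))))"
proof (rule exI[of _ 1], rule exI[of _ 4], intro conjI allI impI)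
  fix L :: "nat \<Rightarrow> rat" and n k :: nat
  assume n: "2 \<le> n" and k: "2 \<le> k" and pos: "\<forall>i\<in>{1..n}. 0 < L i"
    and sorted: "\<forall>i\<in>{1..n}. \<forall>j\<in>{1..n}. i \<le> j \<longrightarrow> L j \<le> L i"
  show "card (I_co L n k) \<le> min (k - 1) n"
    using card_mono[OF _ I_co_subset[OF sorted]] k by simp
  show "real (size (candidates L (I_co L n k) (\<lambda>i. 1) (\<lambda>i. ceil_div k i)))
          \<le> 4 * real k * ln (real (min k n))"
    by (rule size_candidates_I_co_upper[OF n k sorted])
  assume distinct: "\<forall>i\<in>{1..n}. \<forall>j\<in>{1..n}. i \<noteq> j \<longrightarrow> L i \<noteq> L j"
  show "card (I_co L n k) = min (k - 1) n"
    using I_co_eq_if_distinct[OF pos sorted distinct] k by simp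
  show "1 * real k * ln (real (min k n))
          \<le> real (size (candidates L (I_co L n k) (\<lambda>i. 1) (\<lambda>i. ceil_div k i)))"
    using size_candidates_I_co_lower_if_distinct[OF _ pos sorted distinct] k by simp
qed simp_all

theorem mainTheorem11:
  fixes L :: "nat \<Rightarrow> rat" and n k :: nat
  assumes n_pos: "1 \<le> n"
    and pos: "\<forall>i\<in>{1..n}. 0 < L i"
    and sorted: "\<forall>i\<in>{1..n}. \<forall>j\<in>{1..n}. i \<le> j \<longrightarrow> L j \<le> L i"
    and k_pos: "0 < k"
    and co: "L_co L n k \<noteq> lstar L n k"
  shows "admissible_restriction L n k (I_co L n k) (\<lambda>i. 1) (\<lambda>i. ceil_div k i)
       \<and> size (candidates L (I_co L n k) (\<lambda>i. 1) (\<lambda>i. ceil_div k i))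
           = (\<Sum>i\<in>I_co L n k. ceil_div k i)
       \<and> (\<exists>c1 c2 :: real. 0 < c1 \<and> 0 < c2 \<and>
           (\<forall>(L' :: nat \<Rightarrow> rat) n' k'. 2 \<le> n' \<longrightarrow> 2 \<le> k' \<longrightarrow>
              (\<forall>i\<in>{1..n'}. 0 < L' i) \<longrightarrow>
              (\<forall>i\<in>{1..n'}. \<forall>j\<in>{1..n'}. i \<le> j \<longrightarrow> L' j \<le> L' i) \<longrightarrow>
              card (I_co L' n' k') \<le> min (k' - 1) n'
              \<and> real (size (candidates L' (I_co L' n' k') (\<lambda>i. 1) (\<lambda>i. ceil_div k' i)))
                  \<le> c2 * real k' * ln (real (min k' n'))
              \<and> ((\<forall>i\<in>{1..n'}. \<forall>j\<in>{1..n'}. i \<noteq> j \<longrightarrow> L' i \<noteq> L' j) \<longrightarrow>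
                   card (I_co L' n' k') = min (k' - 1) n'
                   \<and> c1 * real k' * ln (real (min k' n'))
                     \<le> real (size (candidates L' (I_co L' n' k') (\<lambda>i. 1) (\<lambda>i. ceil_div k' i))))))"
  by (intro conjI admissible_I_co[OF n_pos pos sorted k_pos co] size_candidates_I_co
      size_candidates_I_co_Theta)

end
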